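(* For $q\ge p\ge2$, $\mathrm{Z}_+(K_{p,q})=p$ and $\overline{\mathrm{Z}}_+(K_{p,q})=q$. If $p\ge3$, then $z^+_0(K_{p,q})=p+q-2$; in particular, for $p\ge4$, $z^+_0(K_{p,p})=2p-2>\overline{\mathrm{Z}}_+(K_{p,p})+1$. For $q\ge4$, $\underline{z^+_0}(K_{2,q})=3$ and $z^+_0(K_{2,q})=q+1$.
   Context: All graphs are finite, simple, undirected. PSD color change rule: with $B$ the set of blue vertices and $W=V(G)\setminus B$ the white vertices, let $W_1,\dots,W_k$ be the vertex sets of the connected components of $G[W]$; if $u\in B$, $w\in W_i$, and $w$ is the only white neighbor of $u$ in $G[W_i\cup B]$, then $u$ may color $w$ blue. $S$ is a PSD forcing set if starting with exactly $S$ blue and applying the rule repeatedly, all vertices become blue. $\mathrm{Z}_+(G)$ is the minimum cardinality of a PSD forcing set and $\overline{\mathrm{Z}}_+(G)$ the maximum cardinality of an inclusion-minimal PSD forcing set. $\mathfrak{Z}^+(G)$ has as vertices the PSD forcing sets, with $S_1S_2$ an edge iff $|S_1\ominus S_2|=1$; $\mathfrak{Z}^+_k(G)$ is its subgraph induced by PSD forcing sets of size at most $k$. $z^+_0(G)$ is the least $k_0$ with $\mathfrak{Z}^+_k(G)$ connected for all $k\ge k_0$; $\underline{z^+_0}(G)$ is the least $k$ with $\mathfrak{Z}^+_k(G)$ connected. $K_{p,q}$ is the complete bipartite graph with parts of sizes $p,q$. *)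

theory Defs
  imports Main
begin

text \<open>A finite simple graph is given by a vertex set V and a symmetric irreflexive
adjacency relation E (only used on vertices of V).\<close>

definition white_conn :: "'a set \<Rightarrow> ('a \<Rightarrow> 'a \<Rightarrow> bool) \<Rightarrow> 'a set \<Rightarrow> 'a \<Rightarrow> 'a \<Rightarrow> bool" where
  "white_conn V E B x y \<longleftrightarrow> (\<lambda>a b. a \<in> V - B \<and> b \<in> V - B \<and> E a b)\<^sup>*\<^sup>* x y"

definition psd_force :: "'a set \<Rightarrow> ('a \<Rightarrow> 'a \<Rightarrow> bool) \<Rightarrow> 'a set \<Rightarrow> 'a \<Rightarrow> 'a \<Rightarrow> bool" where
  "psd_force V E B u w \<longleftrightarrow> u \<in> V \<and> u \<in> B \<and> w \<in> V - B \<and> E u w \<and>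
     (\<forall>w'. w' \<in> V - B \<and> E u w' \<and> white_conn V E B w w' \<longrightarrow> w' = w)"

inductive psd_reach :: "'a set \<Rightarrow> ('a \<Rightarrow> 'a \<Rightarrow> bool) \<Rightarrow> 'a set \<Rightarrow> 'a set \<Rightarrow> bool"
  for V E S where
  base: "psd_reach V E S S"
| step: "psd_reach V E S B \<Longrightarrow> psd_force V E B u w \<Longrightarrow> psd_reach V E S (insert w B)"

definition psd_forcing_set :: "'a set \<Rightarrow> ('a \<Rightarrow> 'a \<Rightarrow> bool) \<Rightarrow> 'a set \<Rightarrow> bool" where
  "psd_forcing_set V E S \<longleftrightarrow> S \<subseteq> V \<and> psd_reach V E S V"

definition minimal_psd_forcing_set :: "'a set \<Rightarrow> ('a \<Rightarrow> 'a \<Rightarrow> bool) \<Rightarrow> 'a set \<Rightarrow> bool" where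
  "minimal_psd_forcing_set V E S \<longleftrightarrow>
     psd_forcing_set V E S \<and> (\<forall>T. T \<subset> S \<longrightarrow> \<not> psd_forcing_set V E T)"

definition Zplus :: "'a set \<Rightarrow> ('a \<Rightarrow> 'a \<Rightarrow> bool) \<Rightarrow> nat" where
  "Zplus V E = Min (card ` {S. psd_forcing_set V E S})"

definition Zplus_bar :: "'a set \<Rightarrow> ('a \<Rightarrow> 'a \<Rightarrow> bool) \<Rightarrow> nat" where
  "Zplus_bar V E = Max (card ` {S. minimal_psd_forcing_set V E S})"

definition recon_adj :: "'a set \<Rightarrow> 'a set \<Rightarrow> bool" where
  "recon_adj S1 S2 \<longleftrightarrow> card ((S1 - S2) \<union> (S2 - S1)) = 1"

definition recon_vertices :: "'a set \<Rightarrow> ('a \<Rightarrow> 'a \<Rightarrow> bool) \<Rightarrow> nat \<Rightarrow> 'a set set" where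
  "recon_vertices V E k = {S. psd_forcing_set V E S \<and> card S \<le> k}"

text \<open>A graph (vertex set X, adjacency R) is connected: nonempty and any two vertices are
joined by a walk inside X.  (The empty graph is not considered connected.)\<close>
definition graph_connected :: "'b set \<Rightarrow> ('b \<Rightarrow> 'b \<Rightarrow> bool) \<Rightarrow> bool" where
  "graph_connected X R \<longleftrightarrow> X \<noteq> {} \<and>
     (\<forall>x\<in>X. \<forall>y\<in>X. (\<lambda>a b. a \<in> X \<and> b \<in> X \<and> R a b)\<^sup>*\<^sup>* x y)"

definition recon_connected :: "'a set \<Rightarrow> ('a \<Rightarrow> 'a \<Rightarrow> bool) \<Rightarrow> nat \<Rightarrow> bool" where
  "recon_connected V E k \<longleftrightarrow> graph_connected (recon_vertices V E k) recon_adj"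

definition z0plus :: "'a set \<Rightarrow> ('a \<Rightarrow> 'a \<Rightarrow> bool) \<Rightarrow> nat" where
  "z0plus V E = (LEAST k0. \<forall>k\<ge>k0. recon_connected V E k)"

definition z0plus_under :: "'a set \<Rightarrow> ('a \<Rightarrow> 'a \<Rightarrow> bool) \<Rightarrow> nat" where
  "z0plus_under V E = (LEAST k. recon_connected V E k)"

definition KV :: "nat \<Rightarrow> nat \<Rightarrow> (nat + nat) set" where
  "KV p q = Inl ` {..<p} \<union> Inr ` {..<q}"

definition KE :: "nat + nat \<Rightarrow> nat + nat \<Rightarrow> bool" where
  "KE x y \<longleftrightarrow> isl x \<noteq> isl y"

end

theory Submission
  imports Defs
begin

text \<open>Count the white vertices in each of the two parts. A set is a PSD forcing set iff some
  part is entirely blue, or has exactly one white vertex while the other part has a blue one: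
  then a blue vertex of the other part forces that single white vertex, after which the white
  vertices form an independent set and are forced one by one. Otherwise both parts contain
  white vertices, all white vertices lie in one white component, and every blue vertex sees at
  least two of them, so nothing is ever forced. Hence the minimum is \<open>min p q\<close> and every
  inclusion-minimal forcing set is a part or a part with one vertex exchanged.

  In the reconfiguration graph every forcing set walks (down to a common forcing subset and up
  again) to the part it fills. Joining the two parts needs the set with one white vertex in each
  part, of size \<open>p + q - 2\<close>; one below, the number of white vertices separates the parts. For
  \<open>p = 2\<close> the part of size \<open>q\<close> is an isolated vertex at threshold \<open>q\<close>, while at threshold 3 every
  forcing set fills the part of size 2.\<close>

section \<open>PSD forcing in arbitrary graphs\<close>

lemma psd_reach_trans:
  assumes "psd_reach V E B C" "psd_reach V E S B"
  shows "psd_reach V E S C"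
  using assms by (induction rule: psd_reach.induct) (auto intro: psd_reach.step)

lemma psd_reach_first_force:
  assumes "psd_reach V E S B" "B \<noteq> S"
  shows "\<exists>u w. psd_force V E S u w"
  using assms by (induction rule: psd_reach.induct) auto

lemma white_conn_independent:
  assumes "\<forall>x\<in>V - B. \<forall>y\<in>V - B. \<not> E x y" "white_conn V E B x y"
  shows "y = x"
  using assms(2) unfolding white_conn_def
  by (rule converse_rtranclpE) (use assms(1) in auto)

lemma psd_reach_independent_whites:
  assumes "finite V" "S \<subseteq> V"
    and independent: "\<forall>x\<in>V - S. \<forall>y\<in>V - S. \<not> E x y"
    and dominated: "\<forall>w\<in>V - S. \<exists>u\<in>S. E u w"
  shows "psd_reach V E S V"
proof -
  have "psd_reach V E S (S \<union> F)" if "finite F" "F \<subseteq> V - S" for F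
    using that
  proof (induction F rule: finite_induct)
    case empty
    show ?case by (simp add: psd_reach.base)
  next
    case (insert w F)
    obtain u where u: "u \<in> S" "E u w" using dominated insert.prems by blast
    have "\<forall>x\<in>V - (S \<union> F). \<forall>y\<in>V - (S \<union> F). \<not> E x y" using independent by blast
    then have "psd_force V E (S \<union> F) u w"
      using u insert white_conn_independent[of V "S \<union> F" E w] assms(2)
      unfolding psd_force_def by blast
    with insert have "psd_reach V E S (insert w (S \<union> F))" by (auto intro: psd_reach.step)
    then show ?case by simp
  qed
  from this[of "V - S"] show ?thesis
    using assms(1,2) by (simp add: Un_absorb1)
qed

lemma finite_psd_forcing_sets:
  "finite V \<Longrightarrow> finite {S. psd_forcing_set V E S}"
  by (rule finite_subset[of _ "Pow V"]) (auto simp: psd_forcing_set_def)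

section \<open>Connectivity and reconfiguration graphs\<close>

lemma graph_connected_if_hub:
  assumes "symp R" "h \<in> X" "\<forall>x\<in>X. (\<lambda>a b. a \<in> X \<and> b \<in> X \<and> R a b)\<^sup>*\<^sup>* x h"
  shows "graph_connected X R"
proof -
  let ?W = "(\<lambda>a b. a \<in> X \<and> b \<in> X \<and> R a b)\<^sup>*\<^sup>*"
  have "symp ?W"
    using assms(1) by (intro symp_rtranclp) (auto intro: sympI dest: sympD)
  then have "?W x y" if "x \<in> X" "y \<in> X" for x y
    using assms(3) that by (meson rtranclp_trans sympD)
  with assms(2) show ?thesis unfolding graph_connected_def by blast
qed

lemma not_graph_connected_if_invariant:
  assumes "x \<in> X" "y \<in> X" "Q x" "\<not> Q y"
    and preserved: "\<And>a b. a \<in> X \<Longrightarrow> b \<in> X \<Longrightarrow> R a b \<Longrightarrow> Q a \<Longrightarrow> Q b"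
  shows "\<not> graph_connected X R"
proof
  assume "graph_connected X R"
  then have "(\<lambda>a b. a \<in> X \<and> b \<in> X \<and> R a b)\<^sup>*\<^sup>* x y"
    using assms(1,2) unfolding graph_connected_def by blast
  then have "Q y" using assms(3) by (induction rule: rtranclp_induct) (auto intro: preserved)
  with assms(4) show False by contradiction
qed

lemma symp_recon_adj: "symp recon_adj"
  by (auto intro: sympI simp: recon_adj_def Un_commute)

lemma recon_adj_insert: "x \<notin> S \<Longrightarrow> recon_adj S (insert x S)"
  by (simp add: recon_adj_def insert_Diff_if)

lemma recon_adj_cases:
  assumes "recon_adj S T"
  obtains x where "x \<notin> S" "T = insert x S" | x where "x \<notin> T" "S = insert x T"
proof -
  obtain x where x: "(S - T) \<union> (T - S) = {x}"
    using assms unfolding recon_adj_def by (elim card_1_singletonE)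
  then have x_iff: "x \<in> S \<longleftrightarrow> x \<notin> T" by blast
  have same: "y \<in> S \<longleftrightarrow> y \<in> T" if "y \<noteq> x" for y
    using x that by blast
  show ?thesis
  proof (cases "x \<in> S")
    case True
    then have "S = insert x T" unfolding set_eq_iff using same by (metis insert_iff)
    then show ?thesis using x_iff True that(2) by blast
  next
    case False
    then have "T = insert x S" unfolding set_eq_iff using same x_iff by (metis insert_iff)
    then show ?thesis using False that(1) by blast
  qed
qed

lemma z0plus_eqI:
  assumes "\<forall>k\<ge>N. recon_connected V E k" "\<not> recon_connected V E (N - 1)" "0 < N"
  shows "z0plus V E = N"
  unfolding z0plus_def
proof (rule Least_equality)
  fix k0 assume "\<forall>k\<ge>k0. recon_connected V E k"
  with assms(2,3) show "N \<le> k0" by (metis Suc_pred' not_less_eq_eq)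
qed (use assms(1) in blast)

lemma z0plus_under_eqI:
  assumes "recon_connected V E N" "\<forall>k<N. \<not> recon_connected V E k"
  shows "z0plus_under V E = N"
  unfolding z0plus_under_def
  by (rule Least_equality) (use assms not_less in blast)+

section \<open>The complete bipartite graph\<close>

locale complete_bipartite =
  fixes p q :: nat
  assumes p_pos: "0 < p" and q_pos: "0 < q"
begin

abbreviation V :: "(nat + nat) set" where "V \<equiv> KV p q"

definition part :: "bool \<Rightarrow> (nat + nat) set" where
  "part b = {x \<in> V. isl x = b}"

definition white_count :: "bool \<Rightarrow> (nat + nat) set \<Rightarrow> nat" where
  "white_count b S = card (part b - S)"

lemma part_True: "part True = Inl ` {..<p}"
  by (auto simp: part_def KV_def)

lemma part_False: "part False = Inr ` {..<q}"
  by (auto simp: part_def KV_def)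

lemma card_part [simp]: "card (part True) = p" "card (part False) = q"
  by (simp_all add: part_True part_False card_image)

lemma finite_part [simp]: "finite (part b)"
  by (cases b) (simp_all add: part_True part_False)

lemma V_eq_parts: "V = part True \<union> part False"
  by (auto simp: part_def)

lemma finite_V: "finite V"
  by (simp add: V_eq_parts)

lemma part_subset_V: "part b \<subseteq> V"
  by (auto simp: part_def)

lemma mem_part_iff: "x \<in> part b \<longleftrightarrow> x \<in> V \<and> isl x = b"
  by (simp add: part_def)

lemma part_nonempty: "part b \<noteq> {}"
  using p_pos q_pos by (cases b) (auto simp: part_True part_False)

lemma Inl_0_mem_part: "Inl 0 \<in> part True" and Inr_0_mem_part: "Inr 0 \<in> part False"
  using p_pos q_pos by (auto simp: part_True part_False)

lemma white_count_le: "white_count b S \<le> card (part b)"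
  unfolding white_count_def by (rule card_mono) auto

lemma white_count_eq_0_iff: "white_count b S = 0 \<longleftrightarrow> part b \<subseteq> S"
  by (auto simp: white_count_def)

lemma white_count_less_iff: "white_count b S < card (part b) \<longleftrightarrow> part b \<inter> S \<noteq> {}"
proof -
  have "card (part b - S) < card (part b) \<longleftrightarrow> part b - S \<noteq> part b"
    using psubset_card_mono[of "part b" "part b - S"] by (auto simp: psubset_eq)
  then show ?thesis unfolding white_count_def by blast
qed

lemma white_count_antimono: "S \<subseteq> T \<Longrightarrow> white_count b T \<le> white_count b S"
  unfolding white_count_def by (rule card_mono) auto

lemma card_plus_white_counts:
  assumes "S \<subseteq> V"
  shows "card S + white_count True S + white_count False S = p + q"
proof -
  have split: "card (part b - S) + card (part b \<inter> S) = card (part b)" for b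
    using card_Diff_subset_Int[of "part b" S] card_mono[of "part b" "part b \<inter> S"] by simp
  have "S = (part True \<inter> S) \<union> (part False \<inter> S)"
    using assms V_eq_parts by blast
  moreover have "(part True \<inter> S) \<inter> (part False \<inter> S) = {}"
    by (auto simp: mem_part_iff)
  ultimately have "card S = card (part True \<inter> S) + card (part False \<inter> S)"
    by (metis card_Un_disjoint finite_Int finite_part)
  with split[of True] split[of False] show ?thesis
    unfolding white_count_def by simp
qed

definition fills_part :: "bool \<Rightarrow> (nat + nat) set \<Rightarrow> bool" where
  "fills_part b S \<longleftrightarrow>
     white_count b S = 0 \<or> white_count b S = 1 \<and> white_count (\<not> b) S < card (part (\<not> b))"

lemma fills_part_mono:
  assumes "fills_part b S" "S \<subseteq> T"
  shows "fills_part b T"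
  using assms white_count_antimono[OF assms(2), of b] white_count_antimono[OF assms(2), of "\<not> b"]
  unfolding fills_part_def by auto

lemma card_part_le_if_fills_part:
  assumes "S \<subseteq> V" "fills_part b S"
  shows "card (part b) \<le> card S"
  using assms card_plus_white_counts[OF assms(1)] white_count_le[of "\<not> b" S]
  unfolding fills_part_def by (cases b) auto

lemma white_conn_if_both_parts_white:
  assumes "part True - B \<noteq> {}" "part False - B \<noteq> {}" "x \<in> V - B" "y \<in> V - B"
  shows "white_conn V KE B x y"
proof (cases "isl x = isl y")
  case True
  obtain z where z: "z \<in> part (\<not> isl x) - B" using assms(1,2) by (cases "isl x") auto
  let ?R = "\<lambda>a b. a \<in> V - B \<and> b \<in> V - B \<and> KE a b"
  have "?R x z" "?R z y" using z True assms(3,4) by (auto simp: KE_def mem_part_iff)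
  then show ?thesis
    unfolding white_conn_def by (rule converse_rtranclp_into_rtranclp[OF _ r_into_rtranclp])
next
  case False
  with assms(3,4) show ?thesis unfolding white_conn_def by (auto simp: KE_def)
qed

lemma psd_reach_if_part_blue:
  assumes "S \<subseteq> V" "part b \<subseteq> S"
  shows "psd_reach V KE S V"
proof (rule psd_reach_independent_whites[OF finite_V assms(1)])
  have whites: "\<forall>x\<in>V - S. isl x = (\<not> b)" using assms(2) by (auto simp: mem_part_iff)
  then show "\<forall>x\<in>V - S. \<forall>y\<in>V - S. \<not> KE x y"
    by (simp add: KE_def)
  obtain u where "u \<in> part b" using part_nonempty by blast
  with whites assms(2) show "\<forall>w\<in>V - S. \<exists>u\<in>S. KE u w"
    by (auto simp: KE_def mem_part_iff)
qed

lemma psd_reach_if_fills_part: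
  assumes S: "S \<subseteq> V" and fills: "fills_part b S"
  shows "psd_reach V KE S V"
proof (cases "white_count b S = 0")
  case True
  then show ?thesis using psd_reach_if_part_blue S by (simp add: white_count_eq_0_iff)
next
  case False
  then have "white_count b S = 1" "part (\<not> b) \<inter> S \<noteq> {}"
    using fills white_count_less_iff unfolding fills_part_def by auto
  then obtain r u where r: "part b - S = {r}" and u: "u \<in> part (\<not> b)" "u \<in> S"
    unfolding white_count_def by (auto simp: card_1_singleton_iff)
  have r_white: "r \<in> part b - S" using r by blast
  have unique: "w' = r" if "w' \<in> V - S" "KE u w'" for w'
  proof -
    have "w' \<in> part b - S" using that u by (auto simp: KE_def mem_part_iff)
    with r show ?thesis by blast
  qed
  have "KE u r" using u r_white by (auto simp: KE_def mem_part_iff)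
  with u r_white unique have "psd_force V KE S u r"
    unfolding psd_force_def by (auto simp: mem_part_iff)
  then have "psd_reach V KE S (insert r S)"
    by (rule psd_reach.step[OF psd_reach.base])
  moreover have "psd_reach V KE (insert r S) V"
    using r r_white S part_subset_V by (intro psd_reach_if_part_blue[of _ b]) auto
  ultimately show ?thesis by (rule psd_reach_trans[rotated])
qed

lemma not_psd_force:
  assumes "part True - B \<noteq> {}" "part False - B \<noteq> {}" "u \<in> part b"
    and "2 \<le> white_count (\<not> b) B"
  shows "\<not> psd_force V KE B u w"
proof
  assume force: "psd_force V KE B u w"
  then have w: "w \<in> part (\<not> b) - B"
    using assms(3) by (auto simp: psd_force_def KE_def mem_part_iff)
  have "\<not> (\<forall>x\<in>part (\<not> b) - B. \<forall>y\<in>part (\<not> b) - B. x = y)"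
    using assms(4) card_le_Suc0_iff_eq[of "part (\<not> b) - B"]
    unfolding white_count_def by auto
  then obtain w' where w': "w' \<in> part (\<not> b) - B" "w' \<noteq> w"
    using w by blast
  have "KE u w'" using w' assms(3) by (auto simp: KE_def mem_part_iff)
  moreover have "white_conn V KE B w w'"
    using w w' assms(1,2) by (intro white_conn_if_both_parts_white) (auto simp: mem_part_iff)
  ultimately show False
    using force w' unfolding psd_force_def by (auto simp: mem_part_iff)
qed

theorem psd_forcing_set_iff:
  "psd_forcing_set V KE S \<longleftrightarrow> S \<subseteq> V \<and> (\<exists>b. fills_part b S)"
proof (intro iffI; (elim conjE exE)?)
  fix b assume "S \<subseteq> V" "fills_part b S"
  then show "psd_forcing_set V KE S"
    using psd_reach_if_fills_part by (simp add: psd_forcing_set_def)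
next
  assume forcing: "psd_forcing_set V KE S"
  then have S: "S \<subseteq> V" by (simp add: psd_forcing_set_def)
  show "S \<subseteq> V \<and> (\<exists>b. fills_part b S)"
  proof (rule ccontr)
    assume "\<not> ?thesis"
    with S have no_fill: "\<not> fills_part b S" for b by blast
    have whites: "part b - S \<noteq> {}" for b
      using no_fill[of b] white_count_eq_0_iff[of b S] unfolding fills_part_def by auto
    then have "S \<noteq> V" using part_subset_V by blast
    then obtain u w where force: "psd_force V KE S u w"
      using forcing psd_reach_first_force unfolding psd_forcing_set_def by blast
    then have u: "u \<in> part (isl u)" "u \<in> S" by (auto simp: psd_force_def mem_part_iff)
    then have "white_count (isl u) S < card (part (isl u))"
      using white_count_less_iff by blast
    then have "2 \<le> white_count (\<not> isl u) S"
      using no_fill[of "\<not> isl u"] unfolding fills_part_def by auto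
    then show False
      using not_psd_force[OF whites whites u(1)] force by blast
  qed
qed

lemma psd_forcing_set_part: "psd_forcing_set V KE (part b)"
  using part_subset_V white_count_eq_0_iff[of b "part b"]
  by (auto simp: psd_forcing_set_iff fills_part_def)

lemma card_part_cases: "card (part b) = p \<or> card (part b) = q"
  by (cases b) simp_all

theorem Zplus_eq: "Zplus V KE = min p q"
  unfolding Zplus_def
proof (rule Min_eqI)
  show "finite (card ` {S. psd_forcing_set V KE S})"
    by (simp add: finite_V finite_psd_forcing_sets)
next
  fix n assume "n \<in> card ` {S. psd_forcing_set V KE S}"
  then obtain S b where "n = card S" "S \<subseteq> V" "fills_part b S"
    by (auto simp: psd_forcing_set_iff)
  then have "card (part b) \<le> n" using card_part_le_if_fills_part by blast
  then show "min p q \<le> n" using card_part_cases[of b] by linarith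
next
  have "card (part (p \<le> q)) = min p q" by (cases "p \<le> q") auto
  then show "min p q \<in> card ` {S. psd_forcing_set V KE S}"
    using psd_forcing_set_part by (metis rev_image_eqI mem_Collect_eq)
qed

lemma exchange_fills_part:
  assumes "r \<in> part b" "u \<in> part (\<not> b)"
  shows "fills_part b (insert u (part b - {r}))" "card (insert u (part b - {r})) = card (part b)"
proof -
  have "u \<notin> part b" using assms(2) by (auto simp: mem_part_iff)
  then have "part b - insert u (part b - {r}) = {r}" using assms(1) by auto
  then have "white_count b (insert u (part b - {r})) = 1" by (simp add: white_count_def)
  then show "fills_part b (insert u (part b - {r}))"
    using assms(2) white_count_less_iff by (auto simp: fills_part_def)
  have "card (insert u (part b - {r})) = Suc (card (part b - {r}))"
    using \<open>u \<notin> part b\<close> by (intro card_insert_disjoint) auto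
  also have "\<dots> = card (part b)" using assms(1) by (intro card_Suc_Diff1) auto
  finally show "card (insert u (part b - {r})) = card (part b)" .
qed

lemma fills_part_small_subset:
  assumes S: "S \<subseteq> V" and fills: "fills_part b S"
  obtains T where "T \<subseteq> S" "fills_part b T" "card T \<le> card (part b)"
proof (cases "white_count b S = 0")
  case True
  then have "part b \<subseteq> S" by (simp add: white_count_eq_0_iff)
  moreover have "fills_part b (part b)" by (simp add: fills_part_def white_count_eq_0_iff)
  ultimately show ?thesis using that by blast
next
  case False
  then have "white_count b S = 1" "part (\<not> b) \<inter> S \<noteq> {}"
    using fills white_count_less_iff unfolding fills_part_def by auto
  then obtain r u where r: "part b - S = {r}" and u: "u \<in> part (\<not> b)" "u \<in> S"
    unfolding white_count_def by (auto simp: card_1_singleton_iff)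
  then have "insert u (part b - {r}) \<subseteq> S" by blast
  moreover have "r \<in> part b" using r by blast
  ultimately show ?thesis
    using that exchange_fills_part[OF _ u(1)] by (metis order.refl)
qed

lemma card_le_max_if_minimal:
  assumes "minimal_psd_forcing_set V KE S"
  shows "card S \<le> max p q"
proof -
  obtain b where S: "S \<subseteq> V" "fills_part b S"
    using assms by (auto simp: minimal_psd_forcing_set_def psd_forcing_set_iff)
  then obtain T where T: "T \<subseteq> S" "fills_part b T" "card T \<le> card (part b)"
    by (rule fills_part_small_subset)
  then have "psd_forcing_set V KE T" using S by (auto simp: psd_forcing_set_iff)
  then have "T = S" using T(1) assms by (auto simp: minimal_psd_forcing_set_def)
  then show ?thesis using T(3) card_part_cases[of b] by auto
qed

lemma not_psd_forcing_set_if_proper_subset_part: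
  assumes "2 \<le> card (part (\<not> b))" "T \<subset> part b"
  shows "\<not> psd_forcing_set V KE T"
proof -
  have "part (\<not> b) - T = part (\<not> b)" using assms(2) by (auto simp: mem_part_iff)
  then have "white_count (\<not> b) T = card (part (\<not> b))" by (simp add: white_count_def)
  moreover have "white_count b T \<noteq> 0" using assms(2) white_count_eq_0_iff by blast
  ultimately have "\<not> fills_part c T" for c
    using assms(1) by (cases c; cases b) (simp_all add: fills_part_def)
  then show ?thesis by (simp add: psd_forcing_set_iff)
qed

lemma minimal_psd_forcing_set_part:
  "2 \<le> card (part (\<not> b)) \<Longrightarrow> minimal_psd_forcing_set V KE (part b)"
  using psd_forcing_set_part not_psd_forcing_set_if_proper_subset_part
  by (auto simp: minimal_psd_forcing_set_def)

theorem Zplus_bar_eq: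
  assumes "2 \<le> p" "2 \<le> q"
  shows "Zplus_bar V KE = max p q"
  unfolding Zplus_bar_def
proof (rule Max_eqI)
  have "finite {S. minimal_psd_forcing_set V KE S}"
    using finite_psd_forcing_sets[OF finite_V]
    by (rule finite_subset[rotated]) (auto simp: minimal_psd_forcing_set_def)
  then show "finite (card ` {S. minimal_psd_forcing_set V KE S})" by simp
next
  fix n assume "n \<in> card ` {S. minimal_psd_forcing_set V KE S}"
  then show "n \<le> max p q" using card_le_max_if_minimal by auto
next
  have "card (part (q \<le> p)) = max p q" by (cases "q \<le> p") auto
  moreover have "minimal_psd_forcing_set V KE (part (q \<le> p))"
    using assms by (intro minimal_psd_forcing_set_part) (cases "q \<le> p"; simp)
  ultimately show "max p q \<in> card ` {S. minimal_psd_forcing_set V KE S}"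
    by (metis rev_image_eqI mem_Collect_eq)
qed

end

section \<open>Reconfiguration of PSD forcing sets of the complete bipartite graph\<close>

context complete_bipartite
begin

abbreviation recon_walk :: "nat \<Rightarrow> (nat + nat) set \<Rightarrow> (nat + nat) set \<Rightarrow> bool" where
  "recon_walk k \<equiv>
     (\<lambda>S T. S \<in> recon_vertices V KE k \<and> T \<in> recon_vertices V KE k \<and> recon_adj S T)\<^sup>*\<^sup>*"

lemma mem_recon_vertices_iff:
  "S \<in> recon_vertices V KE k \<longleftrightarrow> S \<subseteq> V \<and> (\<exists>b. fills_part b S) \<and> card S \<le> k"
  by (auto simp: recon_vertices_def psd_forcing_set_iff)

lemma recon_walk_sym: "recon_walk k S T \<Longrightarrow> recon_walk k T S"
  using symp_recon_adj
  by (metis (no_types, lifting) sympD sympI symp_rtranclp)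

lemma recon_walk_up:
  assumes "fills_part b T" "T \<subseteq> S" "S \<in> recon_vertices V KE k"
  shows "recon_walk k T S"
proof -
  have S: "S \<subseteq> V" "card S \<le> k" "finite S"
    using assms(3) finite_V by (auto simp: mem_recon_vertices_iff intro: finite_subset)
  have "recon_walk k T (T \<union> F)" if "finite F" "F \<subseteq> S - T" for F
    using that
  proof (induction F rule: finite_induct)
    case empty
    show ?case by simp
  next
    case (insert x F)
    have vertex: "U \<in> recon_vertices V KE k" if "T \<subseteq> U" "U \<subseteq> S" for U
      using that S fills_part_mono[OF assms(1) that(1)] card_mono[OF S(3) that(2)]
      by (auto simp: mem_recon_vertices_iff)
    have "T \<union> F \<in> recon_vertices V KE k" "insert x (T \<union> F) \<in> recon_vertices V KE k"
      using insert assms(2) by (auto intro!: vertex)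
    moreover have "recon_adj (T \<union> F) (insert x (T \<union> F))"
      using insert by (intro recon_adj_insert) auto
    ultimately have "recon_walk k (T \<union> F) (insert x (T \<union> F))"
      by (intro r_into_rtranclp) simp
    with insert show ?case by (auto elim: rtranclp_trans)
  qed
  from this[of "S - T"] show ?thesis
    using S(3) assms(2) by (simp add: Un_absorb1)
qed

lemma recon_walk_via_subset:
  assumes "fills_part b T" "T \<subseteq> S" "T \<subseteq> U"
    and "S \<in> recon_vertices V KE k" "U \<in> recon_vertices V KE k"
  shows "recon_walk k S U"
  using recon_walk_sym[OF recon_walk_up[OF assms(1,2,4)]] recon_walk_up[OF assms(1,3,5)]
  by (rule rtranclp_trans)

text \<open>If part \<open>b\<close> has one white vertex, add a blue vertex \<open>u\<close> of the other part: the set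
  \<open>part b \<union> {u}\<close> shares with \<open>S\<close> the forcing set \<open>S \<inter> (part b \<union> {u})\<close>.\<close>

lemma recon_walk_to_part:
  assumes S: "S \<in> recon_vertices V KE k" and fills: "fills_part b S"
    and k: "card (part b) < k"
  shows "recon_walk k S (part b)"
proof -
  have part_vertex: "part b \<in> recon_vertices V KE k"
    using psd_forcing_set_part k by (simp add: recon_vertices_def)
  have part_fills: "fills_part b (part b)"
    by (simp add: fills_part_def white_count_eq_0_iff)
  show ?thesis
  proof (cases "white_count b S = 0")
    case True
    then show ?thesis
      using part_fills S part_vertex by (intro recon_walk_via_subset) (auto simp: white_count_eq_0_iff)
  next
    case False
    then have one: "white_count b S = 1" and "part (\<not> b) \<inter> S \<noteq> {}"
      using fills white_count_less_iff unfolding fills_part_def by auto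
    then obtain u where u: "u \<in> part (\<not> b)" "u \<in> S" by blast
    define U where "U = insert u (part b)"
    have "u \<notin> part b" using u by (auto simp: mem_part_iff)
    then have "card U = Suc (card (part b))" by (simp add: U_def)
    then have U: "U \<in> recon_vertices V KE k"
      using k u part_subset_V fills_part_mono[OF part_fills, of U]
      by (auto simp: U_def mem_recon_vertices_iff)
    have "part b - S \<inter> U = part b - S" by (auto simp: U_def)
    then have "fills_part b (S \<inter> U)"
      using one u white_count_less_iff[of "\<not> b" "S \<inter> U"]
      by (auto simp: fills_part_def white_count_def U_def)
    then have "recon_walk k S U"
      using S U by (intro recon_walk_via_subset) auto
    moreover have "recon_walk k U (part b)"
      using part_fills U part_vertex by (intro recon_walk_via_subset) (auto simp: U_def)
    ultimately show ?thesis by (rule rtranclp_trans)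
  qed
qed

lemma recon_connected_if_hub_part:
  assumes "card (part b) \<le> k" "\<And>S. S \<in> recon_vertices V KE k \<Longrightarrow> recon_walk k S (part b)"
  shows "recon_connected V KE k"
  unfolding recon_connected_def
  using assms psd_forcing_set_part
  by (intro graph_connected_if_hub[OF symp_recon_adj]) (auto simp: recon_vertices_def)

theorem recon_connected_if_large:
  assumes "2 \<le> p" "2 \<le> q" "p + q - 2 \<le> k" "p < k" "q < k"
  shows "recon_connected V KE k"
proof (rule recon_connected_if_hub_part)
  define S2 where "S2 = V - {Inl 0, Inr 0}"
  have "part b - S2 = {if b then Inl 0 else Inr 0}" for b
    using Inl_0_mem_part Inr_0_mem_part by (cases b) (auto simp: S2_def mem_part_iff)
  then have white: "white_count b S2 = 1" for b by (simp add: white_count_def)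
  then have fills: "fills_part b S2" for b
    using assms(1,2) by (cases b) (simp_all add: fills_part_def)
  have "card S2 = p + q - 2"
    using card_plus_white_counts[of S2] white by (simp add: S2_def)
  then have S2: "S2 \<in> recon_vertices V KE k"
    using fills assms(3) by (auto simp: mem_recon_vertices_iff S2_def)
  fix S assume S: "S \<in> recon_vertices V KE k"
  then obtain b where "fills_part b S" by (auto simp: mem_recon_vertices_iff)
  moreover have part_small: "card (part c) < k" for c
    using card_part_cases[of c] assms(4,5) by auto
  ultimately have "recon_walk k S (part b)"
    using S by (intro recon_walk_to_part)
  have S2_walk: "recon_walk k S2 (part c)" for c
    using recon_walk_to_part[OF S2 fills part_small] .
  have "recon_walk k (part b) (part True)"
    using rtranclp_trans[OF recon_walk_sym[OF S2_walk] S2_walk] .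
  with \<open>recon_walk k S (part b)\<close> show "recon_walk k S (part True)" by (rule rtranclp_trans)
qed (use assms in simp)

lemma white_count_part: "white_count b (part c) = (if b = c then 0 else card (part b))"
proof -
  have "b \<noteq> c \<Longrightarrow> part b - part c = part b" by (auto simp: mem_part_iff)
  then show ?thesis by (auto simp: white_count_def)
qed

lemma white_count_insert:
  assumes "x \<in> part b" "x \<notin> S"
  shows "white_count b S = Suc (white_count b (insert x S))"
    and "white_count (\<not> b) (insert x S) = white_count (\<not> b) S"
proof -
  have "part b - insert x S = (part b - S) - {x}" by blast
  then show "white_count b S = Suc (white_count b (insert x S))"
    using assms card_Suc_Diff1[of "part b - S" x] by (simp add: white_count_def)
  have "part (\<not> b) - insert x S = part (\<not> b) - S" using assms(1) by (auto simp: mem_part_iff)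
  then show "white_count (\<not> b) (insert x S) = white_count (\<not> b) S" by (simp add: white_count_def)
qed

lemma white_counts_recon_adj:
  assumes "S \<subseteq> V" "T \<subseteq> V" "recon_adj S T"
  obtains b where "white_count (\<not> b) T = white_count (\<not> b) S"
    and "white_count b T = Suc (white_count b S) \<or> white_count b S = Suc (white_count b T)"
  using assms(3)
proof (cases rule: recon_adj_cases)
  case (1 x)
  then have "x \<in> part (isl x)" using assms(2) by (simp add: mem_part_iff)
  with 1 show ?thesis using that white_count_insert by metis
next
  case (2 x)
  then have "x \<in> part (isl x)" using assms(1) by (simp add: mem_part_iff)
  with 2 show ?thesis using that white_count_insert by metis
qed

lemma not_recon_connected_if_small:
  assumes "k < min p q"
  shows "\<not> recon_connected V KE k"
proof -
  have "recon_vertices V KE k = {}"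
  proof (rule equals0I)
    fix S assume "S \<in> recon_vertices V KE k"
    then obtain b where S: "S \<subseteq> V" "fills_part b S" "card S \<le> k"
      by (auto simp: mem_recon_vertices_iff)
    then have "card (part b) \<le> k" using card_part_le_if_fills_part[OF S(1,2)] by linarith
    moreover have "min p q \<le> card (part b)" using card_part_cases[of b] by auto
    ultimately show False using assms by linarith
  qed
  then show ?thesis unfolding recon_connected_def graph_connected_def by blast
qed

text \<open>Invariant along walks from \<open>part True\<close>: \<open>part False\<close> keeps at least two white vertices
  (a step inside \<open>part True\<close> does not touch it, and the size bound leaves at least three white
  vertices altogether), so a forcing set has at most one white vertex in \<open>part True\<close>.\<close>

theorem not_recon_connected_sum_minus_3:
  assumes "3 \<le> p" "3 \<le> q"
  shows "\<not> recon_connected V KE (p + q - 3)"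
  unfolding recon_connected_def
proof (rule not_graph_connected_if_invariant)
  let ?Q = "\<lambda>S. white_count True S \<le> 1 \<and> 2 \<le> white_count False S"
  show "part True \<in> recon_vertices V KE (p + q - 3)" "part False \<in> recon_vertices V KE (p + q - 3)"
    using assms psd_forcing_set_part by (auto simp: recon_vertices_def)
  show "?Q (part True)" "\<not> ?Q (part False)"
    using assms by (simp_all add: white_count_part)
  fix S T assume S: "S \<in> recon_vertices V KE (p + q - 3)" and T: "T \<in> recon_vertices V KE (p + q - 3)"
    and adj: "recon_adj S T" and "?Q S"
  obtain d where T_fills: "fills_part d T" and T_V: "T \<subseteq> V" and "card T \<le> p + q - 3"
    using T by (auto simp: mem_recon_vertices_iff)
  then have "3 \<le> white_count True T + white_count False T"
    using card_plus_white_counts[OF T_V] assms by linarith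
  moreover obtain c where "white_count (\<not> c) T = white_count (\<not> c) S"
    and "white_count c T = Suc (white_count c S) \<or> white_count c S = Suc (white_count c T)"
    using white_counts_recon_adj adj S T_V by (auto simp: mem_recon_vertices_iff)
  ultimately have "2 \<le> white_count False T"
    using \<open>?Q S\<close> by (cases c) auto
  with T_fills show "?Q T" by (cases d) (auto simp: fills_part_def)
qed

lemma not_recon_adj_part:
  assumes "2 \<le> card (part (\<not> b))" "T \<in> recon_vertices V KE (card (part b))"
  shows "\<not> recon_adj (part b) T"
proof
  assume "recon_adj (part b) T"
  then show False
  proof (cases rule: recon_adj_cases)
    case (1 x)
    then have "card T = Suc (card (part b))" by simp
    with assms(2) show False by (simp add: mem_recon_vertices_iff)
  next
    case (2 x)
    then have "T \<subset> part b" by blast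
    with assms show False
      using not_psd_forcing_set_if_proper_subset_part by (auto simp: recon_vertices_def)
  qed
qed

theorem not_recon_connected_card_part:
  assumes "2 \<le> card (part (\<not> b))"
    and "T \<in> recon_vertices V KE (card (part b))" "T \<noteq> part b"
  shows "\<not> recon_connected V KE (card (part b))"
  unfolding recon_connected_def
proof (rule not_graph_connected_if_invariant[where Q = "\<lambda>S. S = part b"])
  show "part b \<in> recon_vertices V KE (card (part b))"
    using psd_forcing_set_part by (simp add: recon_vertices_def)
qed (use assms not_recon_adj_part in auto)

theorem recon_connected_2_3:
  assumes "p = 2" "4 \<le> q"
  shows "recon_connected V KE 3"
proof (rule recon_connected_if_hub_part[of True])
  fix S assume S: "S \<in> recon_vertices V KE 3"
  then obtain b where S_fills: "fills_part b S" and S_V: "S \<subseteq> V" and "card S \<le> 3"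
    by (auto simp: mem_recon_vertices_iff)
  have two: "card (part True) = 2" using card_part(1) assms(1) by (rule trans)
  have "3 \<le> white_count True S + white_count False S"
    using card_plus_white_counts[OF S_V] \<open>card S \<le> 3\<close> assms by linarith
  then have "\<not> fills_part False S"
    using white_count_le[of True S] unfolding fills_part_def not_False_eq_True two by arith
  with S_fills have "fills_part True S" by (cases b) simp_all
  then show "recon_walk 3 S (part True)"
    by (rule recon_walk_to_part[OF S]) (unfold two, simp)
qed (use card_part(1) assms(1) in linarith)

theorem z0plus_eq_sum_minus_2:
  assumes "3 \<le> p" "3 \<le> q"
  shows "z0plus V KE = p + q - 2"
proof (rule z0plus_eqI)
  show "\<forall>k\<ge>p + q - 2. recon_connected V KE k"
    using assms by (auto intro: recon_connected_if_large)
  show "\<not> recon_connected V KE (p + q - 2 - 1)"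
    using not_recon_connected_sum_minus_3[OF assms] by (simp add: numeral_eq_Suc)
qed (use assms in simp)

theorem z0plus_eq_2_q:
  assumes "p = 2" "3 \<le> q"
  shows "z0plus V KE = q + 1"
proof (rule z0plus_eqI)
  show "\<forall>k\<ge>q + 1. recon_connected V KE k"
  proof (intro allI impI recon_connected_if_large)
    fix k assume "q + 1 \<le> k"
    with assms show "2 \<le> p" "2 \<le> q" "p + q - 2 \<le> k" "p < k" "q < k" by linarith+
  qed
  have "card (part True) \<le> card (part False)" using card_part assms by linarith
  then have "part True \<in> recon_vertices V KE (card (part False))"
    using psd_forcing_set_part by (simp add: recon_vertices_def)
  moreover have "part True \<noteq> part False"
    using Inl_0_mem_part by (auto simp: mem_part_iff)
  moreover have "2 \<le> card (part (\<not> False))" using card_part(1) assms(1) by simp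
  ultimately have "\<not> recon_connected V KE (card (part False))"
    by (intro not_recon_connected_card_part)
  then show "\<not> recon_connected V KE (q + 1 - 1)" by simp
qed simp

theorem z0plus_under_eq_2_q:
  assumes "p = 2" "4 \<le> q"
  shows "z0plus_under V KE = 3"
proof (rule z0plus_under_eqI)
  show "recon_connected V KE 3" using recon_connected_2_3[OF assms] .
  have two: "card (part True) = 2" using card_part(1) assms(1) by (rule trans)
  define T where "T = insert (Inr 0) (part True - {Inl 0})"
  have "Inr 0 \<in> part (\<not> True)" using Inr_0_mem_part by simp
  note exchange = exchange_fills_part[OF Inl_0_mem_part this, folded T_def]
  have "T \<subseteq> V" using Inr_0_mem_part part_subset_V unfolding T_def by blast
  with exchange have "T \<in> recon_vertices V KE (card (part True))"
    unfolding mem_recon_vertices_iff by auto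
  moreover have "Inr 0 \<notin> part True" by (simp add: mem_part_iff)
  then have "T \<noteq> part True" unfolding T_def by blast
  moreover have "2 \<le> card (part (\<not> True))" using assms(2) by simp
  ultimately have "\<not> recon_connected V KE (card (part True))"
    by (intro not_recon_connected_card_part)
  then have not_2: "\<not> recon_connected V KE 2" unfolding two .
  show "\<forall>k<3. \<not> recon_connected V KE k"
  proof (intro allI impI)
    fix k :: nat assume "k < 3"
    then consider "k < min p q" | "k = 2" using assms by linarith
    then show "\<not> recon_connected V KE k"
      by cases (use not_recon_connected_if_small not_2 in auto)
  qed
qed

end

theorem proposition4p8:
  shows "(\<forall>p q. 2 \<le> p \<and> p \<le> q \<longrightarrow>
            Zplus (KV p q) KE = p \<and> Zplus_bar (KV p q) KE = q)
       \<and> (\<forall>p q. 3 \<le> p \<and> p \<le> q \<longrightarrow> z0plus (KV p q) KE = p + q - 2)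
       \<and> (\<forall>p. 4 \<le> p \<longrightarrow> z0plus (KV p p) KE = 2 * p - 2 \<and>
                          2 * p - 2 > Zplus_bar (KV p p) KE + 1)
       \<and> (\<forall>q. 4 \<le> q \<longrightarrow> z0plus_under (KV 2 q) KE = 3 \<and> z0plus (KV 2 q) KE = q + 1)"
proof (intro conjI allI impI)
  fix p q :: nat
  assume pq: "2 \<le> p \<and> p \<le> q"
  then interpret complete_bipartite p q by unfold_locales auto
  show "Zplus (KV p q) KE = p" "Zplus_bar (KV p q) KE = q"
    using Zplus_eq Zplus_bar_eq pq by auto
next
  fix p q :: nat
  assume pq: "3 \<le> p \<and> p \<le> q"
  then interpret complete_bipartite p q by unfold_locales auto
  show "z0plus (KV p q) KE = p + q - 2" using z0plus_eq_sum_minus_2 pq by auto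
next
  fix p :: nat
  assume p: "4 \<le> p"
  then interpret complete_bipartite p p by unfold_locales auto
  show "z0plus (KV p p) KE = 2 * p - 2" using z0plus_eq_sum_minus_2 p by simp
  show "2 * p - 2 > Zplus_bar (KV p p) KE + 1" using Zplus_bar_eq p by simp
next
  fix q :: nat
  assume q: "4 \<le> q"
  then interpret complete_bipartite 2 q by unfold_locales auto
  show "z0plus_under (KV 2 q) KE = 3" "z0plus (KV 2 q) KE = q + 1"
    using z0plus_under_eq_2_q z0plus_eq_2_q q by auto
qed

end
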